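(* Suppose $\operatorname{tr}\big((I-\widehat\Pi)\Pi^*\big)\le\delta^2$ for some $\delta\in[0,1)$, and let $\widehat\Pi_{m^*}$ be the orthogonal projector onto the subspace spanned by eigenvectors of $\widehat\Pi$ corresponding to its $m^*$ largest eigenvalues. Then $\operatorname{tr}\big((I-\widehat\Pi_{m^*})\Pi^*\big)\le\delta^2/(1-\delta^2)$.
   Context: $\Pi^*$ is the orthogonal projector onto an $m^*$-dimensional subspace of $\mathbb R^d$. $I$ is the $d\times d$ identity, $A\preceq B$ means $B-A$ is positive semidefinite. Let $\hat\beta_1,\dots,\hat\beta_L\in\mathbb R^d$ be arbitrary vectors, $\mathcal A_{m^*}=\{\Pi\in\mathbb R^{d\times d}:\Pi=\Pi^\top,\ 0\preceq\Pi\preceq I,\ \operatorname{tr}\Pi\le m^*\}$, and let $\widehat\Pi$ be a minimizer over $\Pi\in\mathcal A_{m^*}$ of $\max_\ell\hat\beta_\ell^\top(I-\Pi)\hat\beta_\ell$. *)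

theory Defs
  imports "HOL-Analysis.Analysis"
begin

definition loewner_le :: "real^'n^'n \<Rightarrow> real^'n^'n \<Rightarrow> bool" where
  "loewner_le A B \<longleftrightarrow> (\<forall>x::real^'n. 0 \<le> x \<bullet> ((B - A) *v x))"

definition orth_proj :: "real^'n^'n \<Rightarrow> bool" where
  "orth_proj P \<longleftrightarrow> transpose P = P \<and> P ** P = P"

definition constr_set :: "nat \<Rightarrow> (real^'n^'n) set" where
  "constr_set m = {P. transpose P = P \<and> loewner_le 0 P \<and> loewner_le P (mat 1) \<and> trace P \<le> real m}"

definition objective :: "(nat \<Rightarrow> real^'n) \<Rightarrow> nat \<Rightarrow> real^'n^'n \<Rightarrow> real" where
  "objective beta L P = Max ((\<lambda>l. beta l \<bullet> ((mat 1 - P) *v beta l)) ` {1..L})"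

definition outer :: "real^'n \<Rightarrow> real^'n \<Rightarrow> real^'n^'n" where
  "outer u v = (\<chi> i j. u $ i * v $ j)"

text \<open>Q is the orthogonal projector onto the span of eigenvectors of P corresponding to its
  m largest eigenvalues: there is an orthonormal eigenbasis u_0..u_{d-1} of P with eigenvalues
  sorted in nonincreasing order such that Q = sum_{i<m} u_i u_i^T.\<close>
definition top_eig_proj :: "real^'n^'n \<Rightarrow> nat \<Rightarrow> real^'n^'n \<Rightarrow> bool" where
  "top_eig_proj P m Q \<longleftrightarrow>
     (\<exists>(u::nat \<Rightarrow> real^'n) (lam::nat \<Rightarrow> real).
        (\<forall>i<CARD('n). \<forall>j<CARD('n). u i \<bullet> u j = (if i = j then 1 else 0)) \<and>
        (\<forall>i<CARD('n). P *v u i = lam i *\<^sub>R u i) \<and>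
        (\<forall>i j. i \<le> j \<longrightarrow> j < CARD('n) \<longrightarrow> lam j \<le> lam i) \<and>
        Q = (\<Sum>i<m. outer (u i) (u i)))"

end

theory Submission
  imports Defs
begin

text \<open>Expand everything in an orthonormal eigenbasis \<open>u\<^sub>0, ..., u\<^sub>d\<^sub>-\<^sub>1\<close> of \<open>Phat\<close> with
  eigenvalues \<open>1 \<ge> \<lambda>\<^sub>0 \<ge> ... \<ge> \<lambda>\<^sub>d\<^sub>-\<^sub>1 \<ge> 0\<close>, \<open>\<Sum> \<lambda>\<^sub>i \<le> m\<close>, and put
  \<open>a\<^sub>i = u\<^sub>i \<bullet> Pstar u\<^sub>i \<in> [0,1]\<close>, so that \<open>\<Sum> a\<^sub>i = tr Pstar = m\<close>.
  Then \<open>D = tr ((I - Phat) Pstar) = \<Sum> (1 - \<lambda>\<^sub>i) a\<^sub>i\<close> and the quantity to bound is the tail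
  mass \<open>s = \<Sum>\<^sub>i\<^sub>\<ge>\<^sub>m a\<^sub>i\<close>. As \<open>\<lambda>\<^sub>i \<le> \<lambda>\<^sub>m\<close> on the tail, \<open>D \<ge> (1 - \<lambda>\<^sub>m) s\<close>; and as the
  \<open>a\<^sub>i\<close> carry mass \<open>m\<close> while the \<open>\<lambda>\<^sub>i\<close> carry at most \<open>m\<close>, \<open>D \<ge> \<lambda>\<^sub>m\<close>.
  Hence \<open>s \<le> D / (1 - \<lambda>\<^sub>m) \<le> D / (1 - D)\<close>.\<close>

lemma outer_mult_vec: "outer u v *v x = (v \<bullet> x) *\<^sub>R u"
  by (simp add: outer_def matrix_vector_mult_def inner_vec_def vec_eq_iff sum_distrib_left mult_ac)

lemma trace_mult_outer: "trace (M ** outer u v) = v \<bullet> (M *v u)"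
  by (simp add: trace_def outer_def matrix_matrix_mult_def matrix_vector_mult_def inner_vec_def
      sum_distrib_left mult_ac)

lemma trace_outer: "trace (outer u v) = v \<bullet> u"
  using trace_mult_outer[of "mat 1" u v] by simp

lemma matrix_vector_mult_sum_left:
  "sum f S *v (x :: 'a::semiring_1^'n) = (\<Sum>i\<in>S. f i *v x)"
  by (induction S rule: infinite_finite_induct) (auto simp: matrix_vector_mult_add_rdistrib)

lemma matrix_mult_sum_right:
  "(M :: 'a::semiring_1^'n^'m) ** sum f S = (\<Sum>i\<in>S. M ** f i)"
  by (induction S rule: infinite_finite_induct) (auto simp: matrix_add_ldistrib)

lemma trace_sum: "trace (sum f S :: 'a::comm_semiring_1^'n^'n) = (\<Sum>i\<in>S. trace (f i))"
  by (induction S rule: infinite_finite_induct) (auto simp: trace_add trace_0[unfolded mat_0])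

lemma inner_symmetric_matrix:
  "transpose P = P \<Longrightarrow> x \<bullet> (P *v y) = (P *v x) \<bullet> (y :: real^'n)"
  by (metis dot_lmul_matrix vector_transpose_matrix)

lemma sum_outer_mult_vec_span:
  fixes B :: "(real^'n) set"
  assumes "finite B" "pairwise orthogonal B" "\<And>b. b \<in> B \<Longrightarrow> norm b = 1" "x \<in> span B"
  shows "(\<Sum>b\<in>B. outer b b) *v x = x"
  using orthonormal_basis_expand[of B x] assms
  by (simp add: matrix_vector_mult_sum_left outer_mult_vec inner_commute)

lemma sum_outer_orthonormal_basis:
  fixes B :: "(real^'n) set"
  assumes "finite B" "pairwise orthogonal B" "\<And>b. b \<in> B \<Longrightarrow> norm b = 1" "span B = UNIV"
  shows "(\<Sum>b\<in>B. outer b b) = mat 1"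
  using sum_outer_mult_vec_span[OF assms(1-3)] assms(4) by (simp add: matrix_eq)

lemma trace_orthonormal_basis:
  fixes B :: "(real^'n) set" and M :: "real^'n^'n"
  assumes "finite B" "pairwise orthogonal B" "\<And>b. b \<in> B \<Longrightarrow> norm b = 1" "span B = UNIV"
  shows "trace M = (\<Sum>b\<in>B. b \<bullet> (M *v b))"
proof -
  have "trace M = trace (M ** (\<Sum>b\<in>B. outer b b))"
    using sum_outer_orthonormal_basis[OF assms] by simp
  then show ?thesis by (simp add: matrix_mult_sum_right trace_sum trace_mult_outer)
qed

lemma orth_proj_eq_sum_outer:
  fixes P :: "real^'n^'n" and B :: "(real^'n) set"
  assumes P: "orth_proj P"
    and B: "finite B" "pairwise orthogonal B" "\<And>b. b \<in> B \<Longrightarrow> norm b = 1"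
      "span B = range ((*v) P)"
  shows "P = (\<Sum>b\<in>B. outer b b)"
proof (rule matrix_eq[THEN iffD2], intro allI)
  fix x
  have sym: "transpose P = P" and idem: "P ** P = P" using P by (auto simp: orth_proj_def)
  have fix_B: "P *v b = b" if b: "b \<in> B" for b
  proof -
    obtain y where "b = P *v y" using B(4) span_base[OF b] by auto
    then show ?thesis using idem by (simp add: matrix_vector_mul_assoc)
  qed
  have "P *v x = (\<Sum>b\<in>B. outer b b) *v (P *v x)"
    using sum_outer_mult_vec_span[OF B(1-3)] B(4) by simp
  also have "\<dots> = (\<Sum>b\<in>B. (b \<bullet> x) *\<^sub>R b)"
    using fix_B inner_symmetric_matrix[OF sym]
    by (auto simp: matrix_vector_mult_sum_left outer_mult_vec intro!: sum.cong)
  also have "\<dots> = (\<Sum>b\<in>B. outer b b) *v x"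
    by (simp add: matrix_vector_mult_sum_left outer_mult_vec)
  finally show "P *v x = (\<Sum>b\<in>B. outer b b) *v x" .
qed

lemma trace_orth_proj:
  fixes P :: "real^'n^'n"
  assumes "orth_proj P"
  shows "trace P = real (rank P)"
proof -
  have "subspace (range ((*v) P))"
    by (simp add: linear_subspace_image[OF matrix_vector_mul_linear])
  then obtain B where B: "pairwise orthogonal B" "\<And>b. b \<in> B \<Longrightarrow> norm b = 1"
     "independent B" "card B = dim (range ((*v) P))" "span B = range ((*v) P)"
    using orthonormal_basis_subspace by metis
  have fin: "finite B" using B(3) independent_imp_finite by blast
  have "trace P = (\<Sum>b\<in>B. trace (outer b b))"
    using orth_proj_eq_sum_outer[OF assms fin B(1,2,5)] by (simp add: trace_sum)
  also have "\<dots> = real (card B)"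
    using B(2) by (simp add: trace_outer dot_square_norm)
  finally show ?thesis using B(4) rank_dim_range[of P] by simp
qed

definition orthonormal_upto :: "(nat \<Rightarrow> real^'n) \<Rightarrow> nat \<Rightarrow> bool" where
  "orthonormal_upto u n \<longleftrightarrow> (\<forall>i<n. \<forall>j<n. u i \<bullet> u j = (if i = j then 1 else 0))"

lemma trace_orthonormal_upto:
  fixes M :: "real^'n^'n"
  assumes u: "orthonormal_upto u CARD('n)"
  shows "trace M = (\<Sum>i<CARD('n). u i \<bullet> (M *v u i))"
proof -
  let ?U = "u ` {..<CARD('n)}"
  have inj: "inj_on u {..<CARD('n)}"
    using u by (intro inj_onI) (metis orthonormal_upto_def lessThan_iff zero_neq_one)
  have orth: "pairwise orthogonal ?U" and unit: "\<And>b. b \<in> ?U \<Longrightarrow> norm b = 1"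
    using u by (auto simp: orthonormal_upto_def pairwise_def orthogonal_def norm_eq_1)
  have "independent ?U"
    using pairwise_orthogonal_independent[OF orth] unit by fastforce
  moreover have "card ?U = DIM(real^'n)" using card_image[OF inj] by simp
  ultimately have "span ?U = UNIV" using dim_eq_card_independent dim_eq_full by metis
  then show ?thesis
    using trace_orthonormal_basis[OF _ orth unit, of M] sum.reindex[OF inj] by simp
qed

lemma sum_outer_orthonormal_upto_mult:
  assumes u: "orthonormal_upto u n" and "m \<le> n" "j < n"
  shows "(\<Sum>i<m. outer (u i) (u i)) *v u j = (if j < m then u j else 0)"
proof -
  have "(\<Sum>i<m. outer (u i) (u i)) *v u j = (\<Sum>i<m. (u i \<bullet> u j) *\<^sub>R u i)"
    by (simp add: matrix_vector_mult_sum_left outer_mult_vec)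
  also have "\<dots> = (\<Sum>i<m. (if i = j then u j else 0))"
    using assms by (intro sum.cong) (auto simp: orthonormal_upto_def)
  finally show ?thesis by simp
qed

lemma trace_mult_eigenbasis:
  fixes M Q :: "real^'n^'n"
  assumes u: "orthonormal_upto u CARD('n)"
    and eig: "\<And>i. i < CARD('n) \<Longrightarrow> M *v u i = c i *\<^sub>R u i"
  shows "trace (M ** Q) = (\<Sum>i<CARD('n). c i * (u i \<bullet> (Q *v u i)))"
  using trace_mul_sym[of M Q] trace_orthonormal_upto[OF u, of "Q ** M"] eig
  by (simp add: matrix_vector_mul_assoc[symmetric] matrix_vector_mult_scaleR)

lemma trace_compl_sum_outer_mult:
  fixes Q :: "real^'n^'n"
  assumes u: "orthonormal_upto u CARD('n)" and m_le: "m \<le> CARD('n)"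
  shows "trace ((mat 1 - (\<Sum>i<m. outer (u i) (u i))) ** Q)
    = (\<Sum>i\<in>{m..<CARD('n)}. u i \<bullet> (Q *v u i))"
proof -
  have "(mat 1 - (\<Sum>i<m. outer (u i) (u i))) *v u i = (if i < m then 0 else 1) *\<^sub>R u i"
    if "i < CARD('n)" for i
    using sum_outer_orthonormal_upto_mult[OF u m_le that]
    by (simp add: matrix_vector_mult_diff_rdistrib)
  from trace_mult_eigenbasis[OF u this, of Q]
  have "trace ((mat 1 - (\<Sum>i<m. outer (u i) (u i))) ** Q)
      = (\<Sum>i<CARD('n). (if i < m then 0 else 1) * (u i \<bullet> (Q *v u i)))" .
  also have "\<dots> = (\<Sum>i\<in>{m..<CARD('n)}. u i \<bullet> (Q *v u i))"
    using sum.atLeastLessThan_concat[of 0 m "CARD('n)"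
        "\<lambda>i. (if i < m then 0 else 1) * (u i \<bullet> (Q *v u i))"] m_le
    by (simp add: atLeast0LessThan)
  finally show ?thesis .
qed

lemma loewner_eigenvalue_bounds:
  assumes "loewner_le 0 P" "loewner_le P (mat 1)"
    and "P *v u = lam *\<^sub>R u" "u \<bullet> u = 1"
  shows "0 \<le> lam \<and> lam \<le> 1"
proof -
  have "0 \<le> u \<bullet> (P *v u)" "0 \<le> u \<bullet> ((mat 1 - P) *v u)"
    using assms(1,2) unfolding loewner_le_def by simp_all
  then show ?thesis
    using assms(3,4) by (simp add: matrix_vector_mult_diff_rdistrib inner_diff_right)
qed

lemma orth_proj_quadratic_form_bounds:
  fixes P :: "real^'n^'n"
  assumes "orth_proj P"
  shows "0 \<le> x \<bullet> (P *v x) \<and> x \<bullet> (P *v x) \<le> x \<bullet> x"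
proof -
  have sym: "transpose P = P" and idem: "P ** P = P" using assms by (auto simp: orth_proj_def)
  have sq: "x \<bullet> (P *v x) = (P *v x) \<bullet> (P *v x)"
    using inner_symmetric_matrix[OF sym, of x "P *v x"] idem by (simp add: matrix_vector_mul_assoc)
  have "0 \<le> (x - P *v x) \<bullet> (x - P *v x)" by simp
  also have "\<dots> = x \<bullet> x - x \<bullet> (P *v x)"
    using sq by (simp add: inner_diff_left inner_diff_right inner_commute)
  finally show ?thesis using sq by simp
qed

lemma constr_set_eigenvalues:
  fixes P :: "real^'n^'n"
  assumes P: "P \<in> constr_set m" and u: "orthonormal_upto u CARD('n)"
    and eig: "\<And>i. i < CARD('n) \<Longrightarrow> P *v u i = lam i *\<^sub>R u i"
  shows "i < CARD('n) \<Longrightarrow> 0 \<le> lam i \<and> lam i \<le> 1"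
    and "(\<Sum>i<CARD('n). lam i) \<le> real m"
proof -
  have unit: "u i \<bullet> u i = 1" if "i < CARD('n)" for i
    using u that by (simp add: orthonormal_upto_def)
  show "0 \<le> lam i \<and> lam i \<le> 1" if "i < CARD('n)"
    using P loewner_eigenvalue_bounds[OF _ _ eig unit] that by (simp add: constr_set_def)
  have "trace P = (\<Sum>i<CARD('n). lam i)"
    using trace_mult_eigenbasis[OF u eig, of "mat 1"] unit by simp
  then show "(\<Sum>i<CARD('n). lam i) \<le> real m"
    using P by (simp add: constr_set_def)
qed

lemma orth_proj_diagonal_entries:
  fixes P :: "real^'n^'n"
  assumes P: "orth_proj P" and u: "orthonormal_upto u CARD('n)"
  shows "i < CARD('n) \<Longrightarrow> 0 \<le> u i \<bullet> (P *v u i) \<and> u i \<bullet> (P *v u i) \<le> 1"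
    and "(\<Sum>i<CARD('n). u i \<bullet> (P *v u i)) = real (rank P)"
proof -
  show "0 \<le> u i \<bullet> (P *v u i) \<and> u i \<bullet> (P *v u i) \<le> 1" if "i < CARD('n)"
    using orth_proj_quadratic_form_bounds[OF P, of "u i"] u that
    by (simp add: orthonormal_upto_def)
  show "(\<Sum>i<CARD('n). u i \<bullet> (P *v u i)) = real (rank P)"
    using trace_orthonormal_upto[OF u, of P] trace_orth_proj[OF P] by simp
qed

lemma tail_sum_weighted_le:
  fixes lam a :: "nat \<Rightarrow> real"
  assumes sorted: "\<And>i j. i \<le> j \<Longrightarrow> j < d \<Longrightarrow> lam j \<le> lam i"
    and lam_le: "\<And>i. i < d \<Longrightarrow> lam i \<le> 1"
    and a_ge: "\<And>i. i < d \<Longrightarrow> 0 \<le> a i"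
  shows "(1 - lam m) * (\<Sum>i\<in>{m..<d}. a i) \<le> (\<Sum>i<d. (1 - lam i) * a i)"
proof (cases "m \<le> d")
  case True
  have "(1 - lam m) * (\<Sum>i\<in>{m..<d}. a i) \<le> (\<Sum>i\<in>{m..<d}. (1 - lam i) * a i)"
    unfolding sum_distrib_left using sorted a_ge by (intro sum_mono mult_right_mono) auto
  also have "\<dots> \<le> (\<Sum>i<d. (1 - lam i) * a i)"
    using lam_le a_ge by (intro sum_mono2) auto
  finally show ?thesis .
next
  case False
  then show ?thesis using lam_le a_ge by (auto intro!: sum_nonneg)
qed

lemma eigenvalue_le_weighted_sum:
  fixes lam a :: "nat \<Rightarrow> real"
  assumes "m < d"
    and sorted: "\<And>i j. i \<le> j \<Longrightarrow> j < d \<Longrightarrow> lam j \<le> lam i"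
    and lam_bounds: "\<And>i. i < d \<Longrightarrow> 0 \<le> lam i \<and> lam i \<le> 1"
    and a_bounds: "\<And>i. i < d \<Longrightarrow> 0 \<le> a i \<and> a i \<le> 1"
    and sum_lam: "(\<Sum>i<d. lam i) \<le> real m"
    and sum_a: "real m \<le> (\<Sum>i<d. a i)"
  shows "lam m \<le> (\<Sum>i<d. (1 - lam i) * a i)"
proof -
  define \<mu> where "\<mu> = lam m"
  have split: "(\<Sum>i<d. f i) = (\<Sum>i<m. f i) + (\<Sum>i\<in>{m..<d}. f i)" for f :: "nat \<Rightarrow> real"
    using \<open>m < d\<close> by (metis atLeast0LessThan less_imp_le_nat le0 sum.atLeastLessThan_concat)
  have pointwise: "(1 - \<mu>) * a i - (if i < m then lam i - \<mu> else 0) \<le> (1 - lam i) * a i"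
    if "i < d" for i
  proof (cases "i < m")
    case True
    then have "0 \<le> (lam i - \<mu>) * (1 - a i)"
      using sorted[of i m] \<open>m < d\<close> True a_bounds[OF that] \<mu>_def by simp
    then show ?thesis using True by (simp add: algebra_simps)
  next
    case False
    then have "0 \<le> (\<mu> - lam i) * a i"
      using sorted[of m i] that False a_bounds[OF that] \<mu>_def by simp
    then show ?thesis using False by (simp add: algebra_simps)
  qed
  have "\<mu> \<le> (\<Sum>i\<in>{m..<d}. lam i)"
    using \<open>m < d\<close> lam_bounds \<mu>_def by (auto simp: sum.atLeast_Suc_lessThan intro!: sum_nonneg)
  then have head: "(\<Sum>i<m. lam i) \<le> real m - \<mu>"
    using sum_lam split[of lam] by linarith
  have "(\<Sum>i<d. (if i < m then lam i - \<mu> else 0)) = (\<Sum>i<m. lam i) - real m * \<mu>"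
    using split[of "\<lambda>i. if i < m then lam i - \<mu> else 0"] by (simp add: sum_subtractf)
  moreover have "(1 - \<mu>) * real m \<le> (1 - \<mu>) * (\<Sum>i<d. a i)"
    using sum_a lam_bounds[OF \<open>m < d\<close>] \<mu>_def by (intro mult_left_mono) auto
  moreover have "(\<Sum>i<d. (1 - \<mu>) * a i - (if i < m then lam i - \<mu> else 0))
      = (1 - \<mu>) * (\<Sum>i<d. a i) - (\<Sum>i<d. (if i < m then lam i - \<mu> else 0))"
    by (simp add: sum_subtractf sum_distrib_left)
  ultimately have "\<mu> \<le> (\<Sum>i<d. (1 - \<mu>) * a i - (if i < m then lam i - \<mu> else 0))"
    using head by (simp add: algebra_simps)
  also have "\<dots> \<le> (\<Sum>i<d. (1 - lam i) * a i)"
    using pointwise by (intro sum_mono) auto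
  finally show ?thesis unfolding \<mu>_def .
qed

lemma tail_sum_le_div:
  fixes lam a :: "nat \<Rightarrow> real"
  assumes sorted: "\<And>i j. i \<le> j \<Longrightarrow> j < d \<Longrightarrow> lam j \<le> lam i"
    and lam_bounds: "\<And>i. i < d \<Longrightarrow> 0 \<le> lam i \<and> lam i \<le> 1"
    and a_bounds: "\<And>i. i < d \<Longrightarrow> 0 \<le> a i \<and> a i \<le> 1"
    and sum_lam: "(\<Sum>i<d. lam i) \<le> real m"
    and sum_a: "real m \<le> (\<Sum>i<d. a i)"
    and weighted: "(\<Sum>i<d. (1 - lam i) * a i) \<le> D" and "D < 1"
  shows "(\<Sum>i\<in>{m..<d}. a i) \<le> D / (1 - D)"
proof (cases "m < d")
  case True
  let ?s = "\<Sum>i\<in>{m..<d}. a i"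
  have "lam m \<le> D"
    using eigenvalue_le_weighted_sum[OF True sorted lam_bounds a_bounds sum_lam sum_a] weighted
    by linarith
  moreover have "0 \<le> ?s" using a_bounds by (auto intro!: sum_nonneg)
  ultimately have "(1 - D) * ?s \<le> (1 - lam m) * ?s" by (intro mult_right_mono) auto
  also have "\<dots> \<le> D"
    using tail_sum_weighted_le[of d lam a m] sorted lam_bounds a_bounds weighted by force
  finally show ?thesis using \<open>D < 1\<close> by (simp add: pos_le_divide_eq mult.commute)
next
  case False
  have "0 \<le> (\<Sum>i<d. (1 - lam i) * a i)"
    using lam_bounds a_bounds by (auto intro!: sum_nonneg)
  then show ?thesis using False weighted \<open>D < 1\<close> by simp
qed

theorem lemma3:
  fixes Pstar Phat Phat_m :: "real^'n^'n"
    and m :: nat and beta :: "nat \<Rightarrow> real^'n" and L :: nat and \<delta> :: real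
  assumes Pstar: "orth_proj Pstar" "rank Pstar = m"
    and L: "L \<ge> 1"
    and Phat_feas: "Phat \<in> constr_set m"
    and Phat_min: "\<forall>P \<in> constr_set m. objective beta L Phat \<le> objective beta L P"
    and delta: "0 \<le> \<delta>" "\<delta> < 1"
    and tr: "trace ((mat 1 - Phat) ** Pstar) \<le> \<delta>\<^sup>2"
    and top: "top_eig_proj Phat m Phat_m"
  shows "trace ((mat 1 - Phat_m) ** Pstar) \<le> \<delta>\<^sup>2 / (1 - \<delta>\<^sup>2)"
proof -
  let ?d = "CARD('n)"
  obtain u :: "nat \<Rightarrow> real^'n" and lam :: "nat \<Rightarrow> real" where
    u: "orthonormal_upto u ?d" and
    eig: "\<And>i. i < ?d \<Longrightarrow> Phat *v u i = lam i *\<^sub>R u i" and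
    sorted: "\<And>i j. i \<le> j \<Longrightarrow> j < ?d \<Longrightarrow> lam j \<le> lam i" and
    Phat_m: "Phat_m = (\<Sum>i<m. outer (u i) (u i))"
    using top unfolding top_eig_proj_def orthonormal_upto_def by blast
  define a where "a i = u i \<bullet> (Pstar *v u i)" for i
  note lam = constr_set_eigenvalues[OF Phat_feas u eig]
  note a = orth_proj_diagonal_entries[OF Pstar(1) u, folded a_def, unfolded Pstar(2)]
  have m_le: "m \<le> ?d" using rank_bound[of Pstar] Pstar(2) by simp
  have "(mat 1 - Phat) *v u i = (1 - lam i) *\<^sub>R u i" if "i < ?d" for i
    using eig[OF that] by (simp add: algebra_simps)
  from trace_mult_eigenbasis[OF u this, of Pstar]
  have weighted: "(\<Sum>i<?d. (1 - lam i) * a i) \<le> \<delta>\<^sup>2"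
    using tr by (simp add: a_def)
  have "trace ((mat 1 - Phat_m) ** Pstar) = (\<Sum>i\<in>{m..<?d}. a i)"
    using trace_compl_sum_outer_mult[OF u m_le] by (simp add: Phat_m a_def)
  then show ?thesis
    using tail_sum_le_div[OF sorted lam(1) a(1) lam(2) _ weighted] a(2) delta
    by (simp add: power_less_one_iff)
qed

end
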